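(* Let $d\ge1$, $p\ge2$, $n<\infty$, and let $\{\xi(i,m):1\le i\le n,1\le m\le d\}$ be mutually independent centered random variables with $\mu_m(p)<\infty$ for all $m$. Then $$\sup_{b\in B(d,n)}|Q_d|_p\le 2^{d/2}\,\frac{p^d}{\log p}\prod_{m=1}^d\mu_m(p).$$
   Context: $I(d,n)=\{(i_1,\dots,i_d):1\le i_1<\dots<i_d\le n\}$, $\xi(I)=\prod_m\xi(i_m,m)$, $Q_d=\sum_{I\in I(d,n)}b(I)\xi(I)$, $B(d,n)=\{b:\sum_Ib(I)^2=1\}$. $|\eta|_p=(\mathbf E|\eta|^p)^{1/p}$, $\mu_m(p)=\sup_i|\xi(i,m)|_p$. *)

theory Defs
  imports "HOL-Probability.Probability"
begin

definition Idx :: "nat \<Rightarrow> nat \<Rightarrow> nat list set" where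
  "Idx d n = {xs. length xs = d \<and> sorted_wrt (<) xs \<and> set xs \<subseteq> {1..n}}"

definition xiI :: "(nat \<Rightarrow> nat \<Rightarrow> 'a \<Rightarrow> real) \<Rightarrow> nat \<Rightarrow> nat list \<Rightarrow> 'a \<Rightarrow> real" where
  "xiI \<xi> d I x = (\<Prod>m\<in>{1..d}. \<xi> (I ! (m - 1)) m x)"

definition Qd :: "(nat \<Rightarrow> nat \<Rightarrow> 'a \<Rightarrow> real) \<Rightarrow> nat \<Rightarrow> nat \<Rightarrow> (nat list \<Rightarrow> real) \<Rightarrow> 'a \<Rightarrow> real" where
  "Qd \<xi> d n b x = (\<Sum>I\<in>Idx d n. b I * xiI \<xi> d I x)"

definition Bset :: "nat \<Rightarrow> nat \<Rightarrow> (nat list \<Rightarrow> real) set" where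
  "Bset d n = {b. (\<Sum>I\<in>Idx d n. (b I)\<^sup>2) = 1}"

definition Lpn :: "'a measure \<Rightarrow> real \<Rightarrow> ('a \<Rightarrow> real) \<Rightarrow> real" where
  "Lpn M p \<eta> = (\<integral>x. \<bar>\<eta> x\<bar> powr p \<partial>M) powr (1 / p)"

definition mu :: "'a measure \<Rightarrow> (nat \<Rightarrow> nat \<Rightarrow> 'a \<Rightarrow> real) \<Rightarrow> nat \<Rightarrow> nat \<Rightarrow> real \<Rightarrow> real" where
  "mu M \<xi> n m p = (SUP i\<in>{1..n}. Lpn M p (\<xi> i m))"

end

theory Submission
  imports Defs
begin

(* The key estimate is a one-step inequality: if e is centered and independent of (F, G), then
   |F + e G|_p^2 <= |F|_p^2 + K^2 |e|_p^2 |G|_p^2  with  K = sqrt 2 p / max 1 (ln p).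
   It comes from integrating the pointwise expansion
   |a + w|^p <= |a|^p + p sgn(a) |a|^(p-1) w + C1 |a|^(p-2) w^2 + C2 |w|^p
   over e (the linear term vanishes), bounding E |F|^(p-2) G^2 by Hoelder, and the elementary
   inequality A^(p/2) + C1 A^(p/2-1) B + C2 B^(p/2) <= (A + K^2 B)^(p/2).
   Splitting Q_d by its last index, Q_d = sum_j xi(j,d) Q_(d-1)(b_j), and adding the n terms one at a
   time gives |Q_d|_p^2 <= K^2 sum_j mu_d^2 |Q_(d-1)(b_j)|_p^2, so |Q_d|_p <= K^d prod_m mu_m by
   induction on d, and finally K^d <= 2^(d/2) p^d / ln p. *)

section \<open>Elementary inequalities for real powers\<close>

lemma Bernoulli_inequality_powr:
  fixes r v :: real
  assumes r: "r \<le> 0 \<or> 1 \<le> r" and v: "-1 < v"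
  shows "1 + r * v \<le> (1 + v) powr r"
proof -
  define k where "k x = (1 + x) powr r - 1 - r * x" for x
  define k' where "k' x = r * ((1 + x) powr (r - 1) - 1)" for x
  have deriv: "DERIV k x :> k' x" if "-1 < x" for x
    using that unfolding k_def k'_def by (auto intro!: derivative_eq_intros simp: algebra_simps)
  have "k 0 \<le> k v"
  proof (cases "0 \<le> v")
    case True
    have nonneg: "0 \<le> k' x" if "0 \<le> x" for x
      using r
    proof
      assume "r \<le> 0"
      then have "(1 + x) powr (r - 1) \<le> (1 + x) powr 0" using that by (intro powr_mono) auto
      then show ?thesis using \<open>r \<le> 0\<close> that by (simp add: k'_def mult_nonpos_nonpos)
    next
      assume "1 \<le> r"
      then have "1 \<le> (1 + x) powr (r - 1)" using that by (intro ge_one_powr_ge_zero) auto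
      then show ?thesis using \<open>1 \<le> r\<close> by (simp add: k'_def)
    qed
    show ?thesis
      by (rule DERIV_nonneg_imp_nondecreasing[OF True]) (use deriv nonneg in force)
  next
    case False
    have nonpos: "k' x \<le> 0" if "-1 < x" "x \<le> 0" for x
      using r
    proof
      assume "r \<le> 0"
      then have "(1 + x) powr 0 \<le> (1 + x) powr (r - 1)" using that by (intro powr_mono') auto
      then show ?thesis using \<open>r \<le> 0\<close> that by (simp add: k'_def mult_nonpos_nonneg)
    next
      assume "1 \<le> r"
      then have "(1 + x) powr (r - 1) \<le> 1" using that by (intro powr_le1) auto
      then show ?thesis using \<open>1 \<le> r\<close> by (simp add: k'_def mult_nonneg_nonpos)
    qed
    show ?thesis using False
      by (intro DERIV_nonpos_imp_nonincreasing[of v]) (use v deriv nonpos in force)+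
  qed
  then show ?thesis by (simp add: k_def)
qed

lemma one_add_powr_ge_superadd:
  fixes q u :: real
  assumes q: "q \<ge> 1" and u: "u \<ge> 0"
  shows "1 + u powr q \<le> (1 + u) powr q"
proof -
  define s where "s = 1 + u"
  have s: "s \<ge> 1" using u by (simp add: s_def)
  have le: "x powr q \<le> x" if "0 \<le> x" "x \<le> 1" for x :: real
    using powr_mono'[of 1 q x] that q by simp
  have "(u / s) powr q + (1 / s) powr q \<le> u / s + 1 / s"
    using s u by (intro add_mono le) (auto simp: s_def)
  also have "\<dots> = 1" using s by (simp add: s_def field_simps)
  finally have "u powr q / s powr q + 1 / s powr q \<le> 1"
    using s u by (simp add: powr_divide)
  then show ?thesis using s by (simp add: s_def field_simps)
qed

lemma one_add_powr_ge_two_term: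
  fixes q u :: real
  assumes q: "q \<ge> 2" and u: "u \<ge> 0"
  shows "1 + q * u + u powr q \<le> (1 + u) powr q"
proof -
  have bernoulli: "1 + (q - 1) * u \<le> (1 + u) powr (q - 1)"
    using q u by (intro Bernoulli_inequality_powr) auto
  have superadd: "1 + u powr (q - 1) \<le> (1 + u) powr (q - 1)"
    using q u by (intro one_add_powr_ge_superadd) auto
  have "1 + q * u + u powr q = (1 + (q - 1) * u) + u * (1 + u powr (q - 1))"
    using u by (cases "u = 0") (auto simp: powr_diff algebra_simps)
  also have "\<dots> \<le> (1 + u) powr (q - 1) + u * (1 + u) powr (q - 1)"
    using bernoulli superadd u by (intro add_mono mult_left_mono) auto
  also have "\<dots> = (1 + u) powr (q - 1) * (1 + u)" by (simp add: algebra_simps)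
  also have "\<dots> = (1 + u) powr q" using u by (simp add: powr_diff)
  finally show ?thesis .
qed

lemma one_add_powr_ge_convex_comb:
  fixes q u \<theta> :: real
  assumes q: "q \<ge> 1" and u: "u \<ge> 0" and \<theta>: "0 \<le> \<theta>" "\<theta> \<le> 1"
  shows "1 + \<theta> * q * u + (1 - \<theta>) * u powr q \<le> (1 + u) powr q"
proof -
  have "1 + \<theta> * q * u + (1 - \<theta>) * u powr q = \<theta> * (1 + q * u) + (1 - \<theta>) * (1 + u powr q)"
    by (simp add: algebra_simps)
  also have "\<dots> \<le> \<theta> * (1 + u) powr q + (1 - \<theta>) * (1 + u) powr q"
    using q u \<theta> Bernoulli_inequality_powr[of q u] one_add_powr_ge_superadd[of q u]
    by (intro add_mono mult_left_mono) auto
  also have "\<dots> = (1 + u) powr q" by (simp add: algebra_simps)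
  finally show ?thesis .
qed

lemma add_powr_ge_scaled:
  fixes q \<alpha> \<beta> K A B :: real
  assumes q: "q \<ge> 1" and \<beta>: "0 \<le> \<beta>" "\<beta> \<le> 1" and K: "K > 0"
    and normalized: "\<And>u. u \<ge> 0 \<Longrightarrow> 1 + \<alpha> * u + \<beta> * u powr q \<le> (1 + u) powr q"
    and A: "A \<ge> 0" and B: "B \<ge> 0"
  shows "A powr q + (\<alpha> * K\<^sup>2) * (A powr (q - 1) * B) + (\<beta> * K powr (2 * q)) * B powr q
           \<le> (A + K\<^sup>2 * B) powr q"
proof (cases "A = 0")
  case True
  have "\<beta> * (K powr (2 * q) * B powr q) \<le> (K\<^sup>2 * B) powr q"
    using \<beta> K B by (simp add: mult_left_le_one_le powr_mult powr_powr flip: powr_numeral)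
  then show ?thesis using True q by (simp add: mult.assoc)
next
  case False
  then have A': "A > 0" using A by auto
  define u where "u = K\<^sup>2 * B / A"
  have u: "u \<ge> 0" using A' B by (simp add: u_def)
  have "A powr q * (1 + \<alpha> * u + \<beta> * u powr q) \<le> A powr q * (1 + u) powr q"
    using normalized[OF u] by (intro mult_left_mono) auto
  moreover have "A powr q * (1 + u) powr q = (A + K\<^sup>2 * B) powr q"
  proof -
    have "A * (1 + u) = A + K\<^sup>2 * B" using A' by (simp add: u_def field_simps)
    then show ?thesis using A' u by (simp flip: powr_mult)
  qed
  moreover have "A powr q * u = K\<^sup>2 * (A powr (q - 1) * B)"
    using A' by (simp add: u_def powr_diff field_simps)
  moreover have "A powr q * u powr q = K powr (2 * q) * B powr q"
    using A' B K by (simp add: u_def powr_divide powr_mult powr_powr flip: powr_numeral)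
  ultimately show ?thesis by (simp add: algebra_simps)
qed

lemma one_add_powr_sub_linear_le_neg:
  fixes p v :: real
  assumes p: "p \<ge> 2" and v: "-1 \<le> v" "v \<le> 0"
  shows "\<bar>1 + v\<bar> powr p - 1 - p * v \<le> p * (p - 1) / 2 * v\<^sup>2"
proof (cases "v = -1")
  case True
  have "0 \<le> (p - 1) * (p - 2)" using p by simp
  then show ?thesis using p True by (simp add: power2_eq_square field_simps)
next
  case False
  then have v1: "-1 < v" using v by auto
  let ?h = "\<lambda>x. p * (p - 1) / 2 * x\<^sup>2 - (1 + x) powr p + 1 + p * x"
  have "?h 0 \<le> ?h v"
  proof (rule DERIV_nonpos_imp_nonincreasing[OF v(2)])
    fix x assume x: "v \<le> x" "x \<le> 0"
    have "DERIV ?h x :> p * (p - 1) * x - p * (1 + x) powr (p - 1) + p"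
      using x v1 by (auto intro!: derivative_eq_intros simp: power2_eq_square field_simps)
    moreover have "1 + (p - 1) * x \<le> (1 + x) powr (p - 1)"
      using x v1 p by (intro Bernoulli_inequality_powr) auto
    then have "p * (1 + (p - 1) * x) \<le> p * (1 + x) powr (p - 1)"
      using p by (intro mult_left_mono) auto
    then have "p * (p - 1) * x - p * (1 + x) powr (p - 1) + p \<le> 0"
      by (simp add: algebra_simps)
    ultimately show "\<exists>y. DERIV ?h x :> y \<and> y \<le> 0" by blast
  qed
  then show ?thesis using v1 by simp
qed

lemma one_add_powr_sub_linear_deriv_ge:
  fixes p x :: real
  assumes p: "p \<ge> 2" and x: "x \<ge> 0"
  shows "2 * ((1 + x) powr p - 1 - p * x) \<le> x * (p * (1 + x) powr (p - 1) - p)"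
proof -
  let ?f = "\<lambda>x. x * (p * (1 + x) powr (p - 1) - p) - 2 * ((1 + x) powr p - 1 - p * x)"
  have "?f 0 \<le> ?f x"
  proof (rule DERIV_nonneg_imp_nondecreasing[OF x])
    fix y assume y: "0 \<le> y" "y \<le> x"
    have "DERIV ?f y :> p * ((p - 1) * y * (1 + y) powr (p - 2) - ((1 + y) powr (p - 1) - 1))"
      using y by (auto intro!: derivative_eq_intros simp: algebra_simps)
    moreover have "(1 + y) powr (p - 1) - 1 \<le> (p - 1) * y * (1 + y) powr (p - 2)"
    proof -
      have "1 + (2 - p) * y \<le> (1 + y) powr (2 - p)"
        using p y by (intro Bernoulli_inequality_powr) auto
      then have "(1 + y) powr (p - 2) * (1 + (2 - p) * y) \<le> (1 + y) powr (p - 2) * (1 + y) powr (2 - p)"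
        by (intro mult_left_mono) auto
      then have "(1 + y) powr (p - 2) * (1 + (2 - p) * y) \<le> 1"
        using y by (simp flip: powr_add)
      moreover have "(1 + y) powr (p - 1) = (1 + y) powr (p - 2) * (1 + y)"
        using y powr_add[of "1 + y" "p - 2" 1] by simp
      ultimately show ?thesis by (simp add: algebra_simps)
    qed
    ultimately show "\<exists>d. DERIV ?f y :> d \<and> 0 \<le> d" using p by force
  qed
  then show ?thesis by simp
qed

lemma one_add_powr_sub_linear_div_sq_mono:
  fixes p v t :: real
  assumes p: "p \<ge> 2" and v: "0 < v" "v \<le> t"
  shows "((1 + v) powr p - 1 - p * v) / v\<^sup>2 \<le> ((1 + t) powr p - 1 - p * t) / t\<^sup>2"
proof (rule DERIV_nonneg_imp_nondecreasing[OF v(2)])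
  fix x assume "v \<le> x" "x \<le> t"
  then have x: "x > 0" using v by auto
  let ?g = "\<lambda>x. (1 + x) powr p - 1 - p * x"
  have "DERIV (\<lambda>x. ?g x / x\<^sup>2) x :>
      ((p * (1 + x) powr (p - 1) - p) * x\<^sup>2 - ?g x * (2 * x)) / (x\<^sup>2 * x\<^sup>2)"
    using x by (auto intro!: derivative_eq_intros)
  moreover have "((p * (1 + x) powr (p - 1) - p) * x\<^sup>2 - ?g x * (2 * x)) / (x\<^sup>2 * x\<^sup>2)
      = (x * (p * (1 + x) powr (p - 1) - p) - 2 * ?g x) / x ^ 3"
    using x by (simp add: power2_eq_square power3_eq_cube field_simps)
  moreover have "0 \<le> (x * (p * (1 + x) powr (p - 1) - p) - 2 * ?g x) / x ^ 3"
    using one_add_powr_sub_linear_deriv_ge[OF p, of x] x by simp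
  ultimately show "\<exists>y. DERIV (\<lambda>x. ?g x / x\<^sup>2) x :> y \<and> 0 \<le> y" by auto
qed

lemma abs_one_add_powr_le:
  fixes p C1 C2 t0 v :: real
  assumes p: "p \<ge> 2" and C1: "C1 \<ge> p * (p - 1) / 2" "C1 \<ge> p" and C2: "C2 \<ge> 1"
    and t0: "t0 > 0" and far: "(1 + 1 / t0) powr p \<le> C2"
    and near: "(1 + t0) powr p - 1 - p * t0 \<le> C1 * t0\<^sup>2"
  shows "\<bar>1 + v\<bar> powr p \<le> 1 + p * v + C1 * v\<^sup>2 + C2 * \<bar>v\<bar> powr p"
proof -
  have vp: "0 \<le> \<bar>v\<bar> powr p" by simp
  consider "v < -1" | "-1 \<le> v \<and> v \<le> 0" | "0 < v \<and> v \<le> t0" | "t0 < v" by linarith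
  then show ?thesis
  proof cases
    case 1
    have "\<bar>1 + v\<bar> powr p \<le> \<bar>v\<bar> powr p" using 1 p by (intro powr_mono2) auto
    also have "\<dots> \<le> C2 * \<bar>v\<bar> powr p" using C2 vp by (simp add: mult_le_cancel_right1)
    finally have far_bound: "\<bar>1 + v\<bar> powr p \<le> C2 * \<bar>v\<bar> powr p" .
    have "-v * 1 \<le> -v * -v" using 1 by (intro mult_left_mono) auto
    then have "p * (-v) \<le> p * v\<^sup>2" using 1 p by (intro mult_left_mono) (auto simp: power2_eq_square)
    also have "\<dots> \<le> C1 * v\<^sup>2" using C1 by (intro mult_right_mono) auto
    finally show ?thesis using far_bound by linarith
  next
    case 2
    have "\<bar>1 + v\<bar> powr p - 1 - p * v \<le> p * (p - 1) / 2 * v\<^sup>2"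
      using one_add_powr_sub_linear_le_neg[OF p] 2 by auto
    also have "\<dots> \<le> C1 * v\<^sup>2" using C1 by (intro mult_right_mono) auto
    finally show ?thesis using vp C2 by (smt (verit) mult_nonneg_nonneg)
  next
    case 3
    have "((1 + v) powr p - 1 - p * v) / v\<^sup>2 \<le> ((1 + t0) powr p - 1 - p * t0) / t0\<^sup>2"
      using one_add_powr_sub_linear_div_sq_mono[OF p] 3 by auto
    also have "\<dots> \<le> C1" using near t0 by (simp add: divide_le_eq)
    finally have "(1 + v) powr p - 1 - p * v \<le> C1 * v\<^sup>2" using 3 by (simp add: divide_le_eq)
    moreover have "\<bar>1 + v\<bar> = 1 + v" using 3 by auto
    ultimately show ?thesis using vp C2 by (smt (verit) mult_nonneg_nonneg)
  next
    case 4
    have "1 + v \<le> (1 + 1 / t0) * v" using 4 t0 by (simp add: field_simps)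
    then have "(1 + v) powr p \<le> ((1 + 1 / t0) * v) powr p" using 4 t0 p by (intro powr_mono2) auto
    also have "\<dots> = (1 + 1 / t0) powr p * v powr p" using 4 t0 by (simp add: powr_mult)
    also have "\<dots> \<le> C2 * v powr p" using far by (intro mult_right_mono) auto
    finally have "\<bar>1 + v\<bar> powr p \<le> C2 * \<bar>v\<bar> powr p" using 4 t0 by simp
    moreover have "0 \<le> 1 + p * v + C1 * v\<^sup>2" using 4 t0 p C1 by (simp add: add_nonneg_nonneg)
    ultimately show ?thesis by linarith
  qed
qed

lemma abs_add_powr_le:
  fixes p C1 C2 a w :: real
  assumes C2: "C2 \<ge> 1"
    and normalized: "\<And>v. \<bar>1 + v\<bar> powr p \<le> 1 + p * v + C1 * v\<^sup>2 + C2 * \<bar>v\<bar> powr p"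
  shows "\<bar>a + w\<bar> powr p \<le> \<bar>a\<bar> powr p + (p * sgn a * \<bar>a\<bar> powr (p - 1)) * w
            + C1 * \<bar>a\<bar> powr (p - 2) * w\<^sup>2 + C2 * \<bar>w\<bar> powr p"
proof (cases "a = 0")
  case True
  then show ?thesis using C2 by (simp add: mult_le_cancel_right1)
next
  case False
  define v where "v = w / a"
  have a: "\<bar>a\<bar> > 0" using False by auto
  have w: "w = a * v" using False by (simp add: v_def)
  have "\<bar>a + w\<bar> = \<bar>a\<bar> * \<bar>1 + v\<bar>" by (simp add: w distrib_left flip: abs_mult)
  then have "\<bar>a + w\<bar> powr p = \<bar>a\<bar> powr p * \<bar>1 + v\<bar> powr p" by (simp add: powr_mult)
  also have "\<dots> \<le> \<bar>a\<bar> powr p * (1 + p * v + C1 * v\<^sup>2 + C2 * \<bar>v\<bar> powr p)"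
    using normalized[of v] by (intro mult_left_mono) auto
  also have "\<dots> = \<bar>a\<bar> powr p + p * (\<bar>a\<bar> powr p * v) + C1 * (\<bar>a\<bar> powr p * v\<^sup>2)
      + C2 * (\<bar>a\<bar> powr p * \<bar>v\<bar> powr p)"
    by (simp add: algebra_simps)
  also have "\<dots> = \<bar>a\<bar> powr p + (p * sgn a * \<bar>a\<bar> powr (p - 1)) * w
            + C1 * \<bar>a\<bar> powr (p - 2) * w\<^sup>2 + C2 * \<bar>w\<bar> powr p"
  proof -
    have "\<bar>a\<bar> powr p * v = sgn a * \<bar>a\<bar> powr (p - 1) * w"
      using a by (simp add: w powr_diff sgn_if)
    moreover have "\<bar>a\<bar> powr p * v\<^sup>2 = \<bar>a\<bar> powr (p - 2) * w\<^sup>2"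
      using a by (simp add: w powr_diff power2_eq_square)
    moreover have "\<bar>a\<bar> powr p * \<bar>v\<bar> powr p = \<bar>w\<bar> powr p"
      by (simp add: w abs_mult powr_mult)
    ultimately show ?thesis by (simp add: algebra_simps)
  qed
  finally show ?thesis .
qed

section \<open>The constant of the one-step inequality\<close>

definition moment_const :: "real \<Rightarrow> real" where
  "moment_const p = sqrt 2 * p / max 1 (ln p)"

definition step_const :: "real \<Rightarrow> real \<Rightarrow> bool" where
  "step_const p K \<longleftrightarrow> (\<exists>C1 C2. C1 \<ge> 0 \<and> C2 \<ge> 1 \<and>
     (\<forall>v. \<bar>1 + v\<bar> powr p \<le> 1 + p * v + C1 * v\<^sup>2 + C2 * \<bar>v\<bar> powr p) \<and>
     (\<forall>A B. A \<ge> 0 \<longrightarrow> B \<ge> 0 \<longrightarrow>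
        A powr (p / 2) + C1 * (A powr (p / 2 - 1) * B) + C2 * B powr (p / 2)
          \<le> (A + K\<^sup>2 * B) powr (p / 2)))"

lemma exp_one_ge: "27 / 10 \<le> exp (1 :: real)"
  using e_approx_32 by (simp add: abs_if split: if_split_asm)

lemma ln_le_div_exp_one:
  fixes x :: real
  assumes "x > 0"
  shows "ln x \<le> x / exp 1"
  using ln_le_minus_one[of "x / exp 1"] assms by (simp add: ln_div)

lemma powr_le_chord:
  fixes b t :: real
  assumes "b > 0" "0 \<le> t" "t \<le> 1"
  shows "b powr t \<le> 1 + (b - 1) * t"
  using convex_onD[OF exp_convex, of t 0 "ln b"] assms by (simp add: powr_def algebra_simps)

lemma two_powr_sub_linear_le_cube:
  fixes p :: real
  assumes p: "2 \<le> p" "p \<le> 4"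
  shows "2 powr p - 1 - p \<le> p ^ 3 / 4"
proof -
  have "2 powr p = 4 * 4 powr ((p - 2) / 2)"
    using powr_powr[of 2 2 "(p - 2) / 2"] powr_add[of 2 2 "p - 2"] by simp
  also have "\<dots> \<le> 4 * (1 + 3 * ((p - 2) / 2))"
    using powr_le_chord[of 4 "(p - 2) / 2"] p by (intro mult_left_mono) auto
  also have "\<dots> = 6 * p - 8" by (simp add: field_simps)
  finally have "2 powr p \<le> 6 * p - 8" .
  moreover have "p ^ 3 - 20 * p + 36 = (p - 13 / 5)\<^sup>2 * (p + 26 / 5) + 7 / 25 * p + 106 / 125"
    by (simp add: power2_eq_square power3_eq_cube field_simps)
  moreover have "0 \<le> (p - 13 / 5)\<^sup>2 * (p + 26 / 5)" using p by simp
  ultimately show ?thesis using p by linarith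
qed

lemma ln_le_sqrt:
  fixes x :: real
  assumes "x > 0"
  shows "ln x \<le> sqrt x"
proof -
  have "ln (sqrt x) \<le> sqrt x / exp 1" using assms by (intro ln_le_div_exp_one) auto
  then have "ln x \<le> 2 * sqrt x / exp 1" using assms by (simp add: ln_sqrt field_simps)
  also have "\<dots> \<le> sqrt x"
    using mult_left_mono[of 2 "exp 1" "sqrt x"] exp_one_ge less_imp_le[OF assms] by (simp add: field_simps)
  finally show ?thesis .
qed

lemma step_constI:
  fixes p K C1 C2 t0 :: real
  assumes p: "p \<ge> 2" and K: "K > 0"
    and C1: "C1 \<ge> p * (p - 1) / 2" "C1 \<ge> p" and C2: "C2 \<ge> 1"
    and t0: "t0 > 0" and far: "(1 + 1 / t0) powr p \<le> C2"
    and near: "(1 + t0) powr p - 1 - p * t0 \<le> C1 * t0\<^sup>2"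
    and normalized: "\<And>u. u \<ge> 0 \<Longrightarrow>
      1 + C1 / K\<^sup>2 * u + C2 / K powr p * u powr (p / 2) \<le> (1 + u) powr (p / 2)"
    and C2_le: "C2 \<le> K powr p"
  shows "step_const p K"
  unfolding step_const_def
proof (intro exI conjI allI impI)
  show "C1 \<ge> 0" "C2 \<ge> 1" using C1 C2 p by auto
  show "\<bar>1 + v\<bar> powr p \<le> 1 + p * v + C1 * v\<^sup>2 + C2 * \<bar>v\<bar> powr p" for v
    by (rule abs_one_add_powr_le[OF p C1 C2 t0 far near])
  show "A powr (p / 2) + C1 * (A powr (p / 2 - 1) * B) + C2 * B powr (p / 2)
      \<le> (A + K\<^sup>2 * B) powr (p / 2)" if "A \<ge> 0" "B \<ge> 0" for A B
    using add_powr_ge_scaled[of "p / 2" "C2 / K powr p" K "C1 / K\<^sup>2" A B] normalized that p K C2 C2_le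
    by simp
qed

lemma step_const_moment_const_lt_4:
  fixes p :: real
  assumes p: "2 \<le> p" "p < 4"
  shows "step_const p (moment_const p)"
proof -
  define L where "L = max 1 (ln p)"
  define K where "K = sqrt 2 * p / L"
  define C1 where "C1 = p / 4 * K\<^sup>2"
  have L1: "1 \<le> L" by (simp add: L_def)
  have L_sq: "L\<^sup>2 \<le> 2"
  proof -
    have "ln p \<le> ln 4" using p by simp
    also have "\<dots> \<le> 25 / 18" using ln_realpow[of 2 2] ln2_le_25_over_36 by simp
    finally have "L \<le> 25 / 18" by (simp add: L_def)
    then have "L\<^sup>2 \<le> (25 / 18)\<^sup>2" using L1 by (intro power_mono) auto
    then show ?thesis by (simp add: power2_eq_square)
  qed
  have "2 * ln p \<le> 2 * (p / exp 1)" using ln_le_div_exp_one[of p] p by simp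
  also have "\<dots> \<le> p" using exp_one_ge p by (simp add: field_simps)
  finally have K_ge: "2 * sqrt 2 \<le> K" using p L1 by (simp add: K_def L_def field_simps)
  have "C1 = p ^ 3 / (2 * L\<^sup>2)"
    by (simp add: C1_def K_def power_divide power_mult_distrib power3_eq_cube) (simp add: power2_eq_square)
  then have C1_cube: "p ^ 3 / 4 \<le> C1"
    using L_sq L1 p by (simp only:) (intro divide_left_mono, auto)
  have "0 \<le> p * ((p - 1)\<^sup>2 + 1)" using p by simp
  then have C1_ge: "p * (p - 1) / 2 \<le> C1"
    using C1_cube by (simp add: power2_eq_square power3_eq_cube algebra_simps)
  have "4 * p \<le> p * p * p" using p mult_right_mono[of 4 "p * p" p] mult_mono[of 2 p 2 p] by simp
  then have C1_ge': "p \<le> C1" using C1_cube by (simp add: power3_eq_cube)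
  have far: "2 * 2 powr p \<le> K powr p"
  proof -
    have "sqrt 2 powr 2 \<le> sqrt 2 powr p" using p by (intro powr_mono) auto
    then have "2 * 2 powr p \<le> 2 powr p * sqrt 2 powr p" by simp
    also have "\<dots> = (2 * sqrt 2) powr p" by (simp add: powr_mult)
    also have "\<dots> \<le> K powr p" using K_ge p by (intro powr_mono2) auto
    finally show ?thesis .
  qed
  have K_pos: "0 < K" using K_ge by (rule less_le_trans[rotated]) simp
  have "step_const p K"
  proof (rule step_constI[where ?C2.0 = "K powr p / 2" and ?t0.0 = 1, OF p(1) K_pos C1_ge C1_ge'])
    show "1 \<le> K powr p / 2" using far ge_one_powr_ge_zero[of 2 p] p by simp
    show "(1 + 1) powr p - 1 - p * 1 \<le> C1 * 1\<^sup>2"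
      using two_powr_sub_linear_le_cube[of p] p C1_cube by simp
    show "1 + C1 / K\<^sup>2 * u + K powr p / 2 / K powr p * u powr (p / 2) \<le> (1 + u) powr (p / 2)"
      if "u \<ge> 0" for u
      using one_add_powr_ge_convex_comb[of "p / 2" u "1 / 2"] that p K_pos by (simp add: C1_def)
  qed (use far K_pos in simp_all)
  then show ?thesis by (simp add: moment_const_def K_def L_def)
qed

lemma step_const_moment_const_ge_4:
  fixes p :: real
  assumes p: "p \<ge> 4"
  shows "step_const p (moment_const p)"
proof -
  have lnp: "ln p \<ge> 1"
    using exp_le p ln_ge_iff[of p 1] by auto
  define K where "K = sqrt 2 * p / ln p"
  define C1 where "C1 = p / 2 * K\<^sup>2"
  define t0 where "t0 = ln p / p"
  have C1_eq: "C1 = p ^ 3 / (ln p)\<^sup>2"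
    by (simp add: C1_def K_def power_divide power_mult_distrib power3_eq_cube) (simp add: power2_eq_square)
  have t0: "t0 > 0" using lnp p by (simp add: t0_def)
  have ln_le: "ln p \<le> 4 / 10 * p"
    using ln_le_div_exp_one[of p] exp_one_ge p divide_left_mono[of "27/10" "exp 1" p] by auto
  have "(ln p)\<^sup>2 \<le> (sqrt p)\<^sup>2" using ln_le_sqrt[of p] lnp p by (intro power_mono) auto
  then have "p ^ 3 / (2 * p) \<le> C1"
    unfolding C1_eq using lnp p by (intro divide_left_mono) auto
  moreover have "p * 2 \<le> p * p" using p by (intro mult_left_mono) auto
  ultimately have C1_ge: "p * (p - 1) / 2 \<le> C1" "p \<le> C1"
    using p by (simp_all add: power3_eq_cube right_diff_distrib, linarith)
  have K1: "K \<ge> 1"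
  proof -
    have "1 * p \<le> sqrt 2 * p" using p by (intro mult_right_mono) auto
    then have "ln p \<le> sqrt 2 * p" using ln_le p by linarith
    then show ?thesis using lnp by (simp add: K_def)
  qed
  have far: "(1 + 1 / t0) powr p \<le> K powr p"
  proof -
    have "14 / 10 \<le> sqrt (2 :: real)" by (rule real_le_rsqrt) (simp add: power2_eq_square)
    then have "4 / 10 * p \<le> (sqrt 2 - 1) * p" using p by (intro mult_right_mono) auto
    then have "ln p \<le> (sqrt 2 - 1) * p" using ln_le by linarith
    then have "(ln p + p) / ln p \<le> sqrt 2 * p / ln p"
      using lnp by (intro divide_right_mono) (auto simp: algebra_simps)
    then have "1 + p / ln p \<le> sqrt 2 * p / ln p" using lnp by (simp add: add_divide_distrib)
    then show ?thesis using t0 p by (intro powr_mono2) (auto simp: t0_def K_def)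
  qed
  have near: "(1 + t0) powr p - 1 - p * t0 \<le> C1 * t0\<^sup>2"
  proof -
    have "(1 + t0) powr p \<le> exp t0 powr p" using t0 p by (intro powr_mono2) auto
    also have "\<dots> = p" using p by (simp add: powr_def t0_def)
    finally show ?thesis using t0 p lnp by (simp add: C1_eq t0_def power2_eq_square power3_eq_cube)
  qed
  have "step_const p K"
  proof (rule step_constI[OF _ _ C1_ge _ t0 far near])
    show "1 + C1 / K\<^sup>2 * u + K powr p / K powr p * u powr (p / 2) \<le> (1 + u) powr (p / 2)"
      if "u \<ge> 0" for u
      using one_add_powr_ge_two_term[of "p / 2" u] that p K1 by (simp add: C1_def)
  qed (use p K1 in \<open>simp_all add: ge_one_powr_ge_zero\<close>)
  then show ?thesis using lnp by (simp add: moment_const_def K_def)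
qed

lemma step_const_moment_const:
  fixes p :: real
  assumes "p \<ge> 2"
  shows "step_const p (moment_const p)"
  using assms step_const_moment_const_ge_4 step_const_moment_const_lt_4 by force

section \<open>Adding an independent centered term\<close>

lemma Holder_integral_powr:
  fixes f g :: "'a \<Rightarrow> real" and \<alpha> \<beta> :: real
  assumes f: "integrable M f" "\<And>x. f x \<ge> 0" and g: "integrable M g" "\<And>x. g x \<ge> 0"
    and \<alpha>\<beta>: "0 \<le> \<alpha>" "0 \<le> \<beta>" "\<alpha> + \<beta> = 1"
  shows "integrable M (\<lambda>x. f x powr \<alpha> * g x powr \<beta>)"
    and "(\<integral>x. f x powr \<alpha> * g x powr \<beta> \<partial>M) \<le> (\<integral>x. f x \<partial>M) powr \<alpha> * (\<integral>x. g x \<partial>M) powr \<beta>"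
proof -
  have young: "a powr \<alpha> * b powr \<beta> \<le> \<alpha> * a + \<beta> * b" if "a \<ge> 0" "b \<ge> 0" for a b
    using Youngs_inequality_0[OF \<alpha>\<beta>, of a b] that \<alpha>\<beta> by (cases "a = 0 \<or> b = 0") auto
  have [measurable]: "f \<in> borel_measurable M" "g \<in> borel_measurable M" using f g by auto
  show int: "integrable M (\<lambda>x. f x powr \<alpha> * g x powr \<beta>)"
  proof (rule Bochner_Integration.integrable_bound[where f = "\<lambda>x. \<alpha> * f x + \<beta> * g x"])
    show "integrable M (\<lambda>x. \<alpha> * f x + \<beta> * g x)" using f g by auto
    show "AE x in M. norm (f x powr \<alpha> * g x powr \<beta>) \<le> norm (\<alpha> * f x + \<beta> * g x)"
      using young f g \<alpha>\<beta> by (auto intro!: always_eventually)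
  qed measurable
  define a where "a = (\<integral>x. f x \<partial>M)"
  define b where "b = (\<integral>x. g x \<partial>M)"
  have ab: "a \<ge> 0" "b \<ge> 0" using f g by (auto simp: a_def b_def)
  show "(\<integral>x. f x powr \<alpha> * g x powr \<beta> \<partial>M) \<le> (\<integral>x. f x \<partial>M) powr \<alpha> * (\<integral>x. g x \<partial>M) powr \<beta>"
  proof (cases "a = 0 \<or> b = 0")
    case True
    then have "AE x in M. f x = 0 \<or> g x = 0"
      using f g integral_nonneg_eq_0_iff_AE[of M f] integral_nonneg_eq_0_iff_AE[of M g]
      by (auto simp: a_def b_def)
    then have "(\<integral>x. f x powr \<alpha> * g x powr \<beta> \<partial>M) = (\<integral>x. 0 \<partial>M)" by (intro integral_cong_AE) auto
    then show ?thesis by (simp flip: a_def b_def)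
  next
    case False
    then have ab: "a > 0" "b > 0" using ab by auto
    have "f x powr \<alpha> * g x powr \<beta> \<le> a powr \<alpha> * b powr \<beta> * (\<alpha> * (f x / a) + \<beta> * (g x / b))" for x
    proof -
      have "(f x / a) powr \<alpha> * (g x / b) powr \<beta> \<le> \<alpha> * (f x / a) + \<beta> * (g x / b)"
        using young[of "f x / a" "g x / b"] f g ab by simp
      then show ?thesis using f g ab by (simp add: powr_divide field_simps)
    qed
    then have "(\<integral>x. f x powr \<alpha> * g x powr \<beta> \<partial>M)
        \<le> (\<integral>x. a powr \<alpha> * b powr \<beta> * (\<alpha> * (f x / a) + \<beta> * (g x / b)) \<partial>M)"
      using int f g by (intro integral_mono) auto
    also have "\<dots> = a powr \<alpha> * b powr \<beta> * (\<alpha> * (a / a) + \<beta> * (b / b))"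
      using f g by (simp add: a_def b_def)
    finally show ?thesis using ab \<alpha>\<beta> by (simp add: a_def b_def)
  qed
qed

lemma Lpn_power2:
  fixes p :: real
  shows "(Lpn M p f)\<^sup>2 = (\<integral>x. \<bar>f x\<bar> powr p \<partial>M) powr (2 / p)"
  by (simp add: Lpn_def powr_powr flip: powr_numeral)

lemma (in prob_space) second_moment_le:
  fixes f :: "'a \<Rightarrow> real" and p :: real
  assumes p: "p \<ge> 2" and [measurable]: "f \<in> borel_measurable M"
    and f: "integrable M (\<lambda>x. \<bar>f x\<bar> powr p)"
  shows "integrable M (\<lambda>x. (f x)\<^sup>2)"
    and "(\<integral>x. (f x)\<^sup>2 \<partial>M) \<le> (\<integral>x. \<bar>f x\<bar> powr p \<partial>M) powr (2 / p)"
proof -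
  have sq: "(\<bar>t\<bar> powr p) powr (2 / p) = t\<^sup>2" for t :: real
    using p by (simp add: powr_powr powr_numeral)
  have "0 \<le> 2 / p" "0 \<le> (p - 2) / p" "2 / p + (p - 2) / p = 1" using p by (auto simp: field_simps)
  note Holder = Holder_integral_powr[OF f _ _ _ this, of "\<lambda>_. 1"]
  show "integrable M (\<lambda>x. (f x)\<^sup>2)" using Holder(1) by (simp add: sq)
  show "(\<integral>x. (f x)\<^sup>2 \<partial>M) \<le> (\<integral>x. \<bar>f x\<bar> powr p \<partial>M) powr (2 / p)"
    using Holder(2) by (simp add: sq prob_space)
qed

lemma (in prob_space) nn_integral_abs_add_mult_powr_le:
  fixes e :: "'a \<Rightarrow> real" and p C1 C2 y c :: real
  assumes p: "p \<ge> 2" and C2: "C2 \<ge> 1"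
    and pw: "\<And>v. \<bar>1 + v\<bar> powr p \<le> 1 + p * v + C1 * v\<^sup>2 + C2 * \<bar>v\<bar> powr p"
    and [measurable]: "e \<in> borel_measurable M"
    and e: "integrable M e" "(\<integral>x. e x \<partial>M) = 0" "integrable M (\<lambda>x. \<bar>e x\<bar> powr p)"
  shows "(\<integral>\<^sup>+x. ennreal (\<bar>y + e x * c\<bar> powr p) \<partial>M)
    \<le> ennreal (\<bar>y\<bar> powr p + C1 * (\<integral>x. (e x)\<^sup>2 \<partial>M) * (\<bar>y\<bar> powr (p - 2) * c\<^sup>2)
        + C2 * (\<integral>x. \<bar>e x\<bar> powr p \<partial>M) * \<bar>c\<bar> powr p)"
proof -
  have e2: "integrable M (\<lambda>x. (e x)\<^sup>2)" using second_moment_le(1)[OF p _ e(3)] by simp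
  define \<phi> where "\<phi> x = \<bar>y\<bar> powr p + (p * sgn y * \<bar>y\<bar> powr (p - 1) * c) * e x
    + (C1 * \<bar>y\<bar> powr (p - 2) * c\<^sup>2) * (e x)\<^sup>2 + (C2 * \<bar>c\<bar> powr p) * \<bar>e x\<bar> powr p" for x
  have bound: "\<bar>y + e x * c\<bar> powr p \<le> \<phi> x" for x
    using abs_add_powr_le[OF C2 pw, of y "e x * c"]
    by (simp add: \<phi>_def abs_mult powr_mult power_mult_distrib algebra_simps)
  have "(\<integral>\<^sup>+x. ennreal (\<bar>y + e x * c\<bar> powr p) \<partial>M) \<le> (\<integral>\<^sup>+x. ennreal (\<phi> x) \<partial>M)"
    using bound by (intro nn_integral_mono) (auto intro: ennreal_leI)
  also have "\<dots> = ennreal (\<integral>x. \<phi> x \<partial>M)"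
    using bound e e2 by (intro nn_integral_eq_integral) (auto simp: \<phi>_def intro: order_trans[OF powr_ge_zero])
  also have "(\<integral>x. \<phi> x \<partial>M) = \<bar>y\<bar> powr p + C1 * (\<integral>x. (e x)\<^sup>2 \<partial>M) * (\<bar>y\<bar> powr (p - 2) * c\<^sup>2)
        + C2 * (\<integral>x. \<bar>e x\<bar> powr p \<partial>M) * \<bar>c\<bar> powr p"
    using e e2 by (simp add: \<phi>_def prob_space algebra_simps)
  finally show ?thesis .
qed

lemma (in prob_space) nn_integral_indep_var:
  assumes ind: "indep_var N1 U N2 W" and [measurable]: "h \<in> borel_measurable (N1 \<Otimes>\<^sub>M N2)"
  shows "(\<integral>\<^sup>+x. h (U x, W x) \<partial>M) = (\<integral>\<^sup>+w. (\<integral>\<^sup>+u. h (u, w) \<partial>distr M N1 U) \<partial>distr M N2 W)"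
proof -
  have [measurable]: "U \<in> measurable M N1" "W \<in> measurable M N2"
    using indep_var_rv1[OF ind] indep_var_rv2[OF ind] by simp_all
  have distr_pair: "distr M (N1 \<Otimes>\<^sub>M N2) (\<lambda>x. (U x, W x)) = distr M N1 U \<Otimes>\<^sub>M distr M N2 W"
    using ind by (simp add: indep_var_distribution_eq)
  interpret PU: prob_space "distr M N1 U" by (rule prob_space_distr) simp
  interpret PW: prob_space "distr M N2 W" by (rule prob_space_distr) simp
  interpret pair_prob_space "distr M N1 U" "distr M N2 W" ..
  have "(\<integral>\<^sup>+x. h (U x, W x) \<partial>M) = (\<integral>\<^sup>+z. h z \<partial>distr M (N1 \<Otimes>\<^sub>M N2) (\<lambda>x. (U x, W x)))"
    by (subst nn_integral_distr) auto
  also have "\<dots> = (\<integral>\<^sup>+z. h z \<partial>(distr M N1 U \<Otimes>\<^sub>M distr M N2 W))"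
    by (simp only: distr_pair)
  also have "\<dots> = (\<integral>\<^sup>+w. (\<integral>\<^sup>+u. h (u, w) \<partial>distr M N1 U) \<partial>distr M N2 W)"
  proof -
    have "sets (distr M N1 U \<Otimes>\<^sub>M distr M N2 W) = sets (N1 \<Otimes>\<^sub>M N2)"
      by (rule sets_pair_measure_cong) simp_all
    then have "h \<in> borel_measurable (distr M N1 U \<Otimes>\<^sub>M distr M N2 W)"
      using measurable_cong_sets by fastforce
    then show ?thesis by (rule nn_integral_snd[symmetric])
  qed
  finally show ?thesis .
qed

lemma (in prob_space) integral_abs_add_indep_mult_powr_le:
  fixes U W :: "'a \<Rightarrow> 'b" and e F G :: "'b \<Rightarrow> real"
  assumes p: "p \<ge> 2" and C1: "C1 \<ge> 0" and C2: "C2 \<ge> 1"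
    and pw: "\<And>v. \<bar>1 + v\<bar> powr p \<le> 1 + p * v + C1 * v\<^sup>2 + C2 * \<bar>v\<bar> powr p"
    and ind: "indep_var N1 U N2 W"
    and [measurable]: "e \<in> borel_measurable N1" "F \<in> borel_measurable N2" "G \<in> borel_measurable N2"
    and e: "integrable M (\<lambda>x. e (U x))" "(\<integral>x. e (U x) \<partial>M) = 0"
      "integrable M (\<lambda>x. \<bar>e (U x)\<bar> powr p)"
    and FG: "integrable M (\<lambda>x. \<bar>F (W x)\<bar> powr p)" "integrable M (\<lambda>x. \<bar>G (W x)\<bar> powr p)"
      "integrable M (\<lambda>x. \<bar>F (W x)\<bar> powr (p - 2) * (G (W x))\<^sup>2)"
  shows "integrable M (\<lambda>x. \<bar>F (W x) + e (U x) * G (W x)\<bar> powr p)"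
    and "(\<integral>x. \<bar>F (W x) + e (U x) * G (W x)\<bar> powr p \<partial>M)
      \<le> (\<integral>x. \<bar>F (W x)\<bar> powr p \<partial>M)
        + C1 * (\<integral>x. (e (U x))\<^sup>2 \<partial>M) * (\<integral>x. \<bar>F (W x)\<bar> powr (p - 2) * (G (W x))\<^sup>2 \<partial>M)
        + C2 * (\<integral>x. \<bar>e (U x)\<bar> powr p \<partial>M) * (\<integral>x. \<bar>G (W x)\<bar> powr p \<partial>M)"
proof -
  have [measurable]: "U \<in> measurable M N1" "W \<in> measurable M N2"
    using indep_var_rv1[OF ind] indep_var_rv2[OF ind] by simp_all
  define m2 where "m2 = (\<integral>x. (e (U x))\<^sup>2 \<partial>M)"
  define m where "m = (\<integral>x. \<bar>e (U x)\<bar> powr p \<partial>M)"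
  define \<psi> where "\<psi> w = \<bar>F w\<bar> powr p + C1 * m2 * (\<bar>F w\<bar> powr (p - 2) * (G w)\<^sup>2)
    + C2 * m * \<bar>G w\<bar> powr p" for w
  have \<psi>_nonneg: "\<psi> w \<ge> 0" for w
    using C1 C2 by (auto simp: \<psi>_def m2_def m_def intro!: add_nonneg_nonneg mult_nonneg_nonneg)
  have \<psi>_int: "integrable M (\<lambda>x. \<psi> (W x))" using FG by (simp add: \<psi>_def)
  interpret PU: prob_space "distr M N1 U" by (rule prob_space_distr) simp
  have inner: "(\<integral>\<^sup>+u. ennreal (\<bar>F w + e u * G w\<bar> powr p) \<partial>distr M N1 U) \<le> ennreal (\<psi> w)" for w
  proof -
    have "integrable (distr M N1 U) e" "(\<integral>u. e u \<partial>distr M N1 U) = 0"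
      "integrable (distr M N1 U) (\<lambda>u. \<bar>e u\<bar> powr p)"
      using e by (simp_all add: integrable_distr_eq integral_distr)
    from PU.nn_integral_abs_add_mult_powr_le[OF p C2 pw _ this, of "F w" "G w"]
    show ?thesis by (simp add: integral_distr \<psi>_def m2_def m_def mult.commute)
  qed
  have "(\<integral>\<^sup>+x. ennreal (\<bar>F (W x) + e (U x) * G (W x)\<bar> powr p) \<partial>M)
      = (\<integral>\<^sup>+w. (\<integral>\<^sup>+u. ennreal (\<bar>F w + e u * G w\<bar> powr p) \<partial>distr M N1 U) \<partial>distr M N2 W)"
    using nn_integral_indep_var[OF ind, of "\<lambda>(u, w). ennreal (\<bar>F w + e u * G w\<bar> powr p)"] by simp
  also have "\<dots> \<le> (\<integral>\<^sup>+w. ennreal (\<psi> w) \<partial>distr M N2 W)"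
    by (intro nn_integral_mono inner)
  also have "\<dots> = ennreal (\<integral>x. \<psi> (W x) \<partial>M)"
    using \<psi>_int \<psi>_nonneg by (simp add: nn_integral_distr \<psi>_def nn_integral_eq_integral)
  finally have bound: "(\<integral>\<^sup>+x. ennreal (\<bar>F (W x) + e (U x) * G (W x)\<bar> powr p) \<partial>M)
      \<le> ennreal (\<integral>x. \<psi> (W x) \<partial>M)" .
  show int: "integrable M (\<lambda>x. \<bar>F (W x) + e (U x) * G (W x)\<bar> powr p)"
    using bound by (intro integrableI_nonneg) (auto simp: top.not_eq_extremum le_less_trans)
  have "(\<integral>x. \<bar>F (W x) + e (U x) * G (W x)\<bar> powr p \<partial>M) \<le> (\<integral>x. \<psi> (W x) \<partial>M)"
    using bound int \<psi>_int \<psi>_nonneg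
    by (subst (asm) nn_integral_eq_integral) (auto simp: integral_nonneg_AE)
  also have "(\<integral>x. \<psi> (W x) \<partial>M) = (\<integral>x. \<bar>F (W x)\<bar> powr p \<partial>M)
        + C1 * (\<integral>x. (e (U x))\<^sup>2 \<partial>M) * (\<integral>x. \<bar>F (W x)\<bar> powr (p - 2) * (G (W x))\<^sup>2 \<partial>M)
        + C2 * (\<integral>x. \<bar>e (U x)\<bar> powr p \<partial>M) * (\<integral>x. \<bar>G (W x)\<bar> powr p \<partial>M)"
    using FG by (simp add: \<psi>_def m2_def m_def)
  finally show "(\<integral>x. \<bar>F (W x) + e (U x) * G (W x)\<bar> powr p \<partial>M) \<le> \<dots>" .
qed

lemma (in prob_space) Lpn_add_indep_mult_le:
  fixes U W :: "'a \<Rightarrow> 'b" and e F G :: "'b \<Rightarrow> real"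
  assumes p: "p \<ge> 2" and K: "step_const p K"
    and ind: "indep_var N1 U N2 W"
    and meas[measurable]: "e \<in> borel_measurable N1" "F \<in> borel_measurable N2" "G \<in> borel_measurable N2"
    and e: "integrable M (\<lambda>x. e (U x))" "(\<integral>x. e (U x) \<partial>M) = 0"
      "integrable M (\<lambda>x. \<bar>e (U x)\<bar> powr p)"
    and FG: "integrable M (\<lambda>x. \<bar>F (W x)\<bar> powr p)" "integrable M (\<lambda>x. \<bar>G (W x)\<bar> powr p)"
  shows "integrable M (\<lambda>x. \<bar>F (W x) + e (U x) * G (W x)\<bar> powr p)"
    and "(Lpn M p (\<lambda>x. F (W x) + e (U x) * G (W x)))\<^sup>2
      \<le> (Lpn M p (\<lambda>x. F (W x)))\<^sup>2 + K\<^sup>2 * ((Lpn M p (\<lambda>x. e (U x)))\<^sup>2 * (Lpn M p (\<lambda>x. G (W x)))\<^sup>2)"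
proof -
  obtain C1 C2 where C: "C1 \<ge> 0" "C2 \<ge> 1"
    and pw: "\<And>v. \<bar>1 + v\<bar> powr p \<le> 1 + p * v + C1 * v\<^sup>2 + C2 * \<bar>v\<bar> powr p"
    and comb: "\<And>A B. A \<ge> 0 \<Longrightarrow> B \<ge> 0 \<Longrightarrow>
      A powr (p / 2) + C1 * (A powr (p / 2 - 1) * B) + C2 * B powr (p / 2) \<le> (A + K\<^sup>2 * B) powr (p / 2)"
    using K unfolding step_const_def by blast
  have [measurable]: "U \<in> measurable M N1" "W \<in> measurable M N2"
    using indep_var_rv1[OF ind] indep_var_rv2[OF ind] by simp_all
  define a where "a = (\<integral>x. \<bar>F (W x)\<bar> powr p \<partial>M)"
  define m where "m = (\<integral>x. \<bar>e (U x)\<bar> powr p \<partial>M)"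
  define z where "z = (\<integral>x. \<bar>G (W x)\<bar> powr p \<partial>M)"
  have amz: "a \<ge> 0" "m \<ge> 0" "z \<ge> 0" by (simp_all add: a_def m_def z_def)
  have powr_p: "(\<bar>t\<bar> powr p) powr ((p - 2) / p) = \<bar>t\<bar> powr (p - 2)"
    "(\<bar>t\<bar> powr p) powr (2 / p) = t\<^sup>2" for t :: real
    using p by (simp_all add: powr_powr powr_numeral)
  have "0 \<le> (p - 2) / p" "0 \<le> 2 / p" "(p - 2) / p + 2 / p = 1" using p by (auto simp: field_simps)
  note Holder = Holder_integral_powr[OF FG(1) powr_ge_zero FG(2) powr_ge_zero this, unfolded powr_p]
  note step = integral_abs_add_indep_mult_powr_le[OF p C pw ind meas e FG Holder(1)]
  show "integrable M (\<lambda>x. \<bar>F (W x) + e (U x) * G (W x)\<bar> powr p)" by (rule step(1))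
  have "random_variable borel (\<lambda>x. e (U x))" by measurable
  note second_moment = second_moment_le(2)[OF p this e(3)]
  define A where "A = a powr (2 / p)"
  define B where "B = m powr (2 / p) * z powr (2 / p)"
  have "(\<integral>x. \<bar>F (W x) + e (U x) * G (W x)\<bar> powr p \<partial>M)
      \<le> a + C1 * m powr (2 / p) * (a powr ((p - 2) / p) * z powr (2 / p)) + C2 * m * z"
    using step(2) second_moment Holder(2) C
    unfolding a_def m_def z_def
    by (elim order_trans) (intro add_mono mult_mono order_refl; simp add: integral_nonneg_AE)
  also have "\<dots> = A powr (p / 2) + C1 * (A powr (p / 2 - 1) * B) + C2 * B powr (p / 2)"
  proof -
    have "A powr (p / 2) = a" "B powr (p / 2) = m * z"
      using amz p by (simp_all add: A_def B_def powr_powr powr_mult)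
    moreover have "A powr (p / 2 - 1) = a powr ((p - 2) / p)"
      using p by (simp add: A_def powr_powr diff_divide_distrib)
    ultimately show ?thesis by (simp add: B_def algebra_simps)
  qed
  also have "\<dots> \<le> (A + K\<^sup>2 * B) powr (p / 2)" by (rule comb) (simp_all add: A_def B_def)
  finally have "(\<integral>x. \<bar>F (W x) + e (U x) * G (W x)\<bar> powr p \<partial>M) powr (2 / p)
      \<le> ((A + K\<^sup>2 * B) powr (p / 2)) powr (2 / p)"
    using p by (intro powr_mono2) (auto simp: integral_nonneg_AE)
  also have "\<dots> = A + K\<^sup>2 * B" using p by (simp add: powr_powr A_def B_def)
  finally show "(Lpn M p (\<lambda>x. F (W x) + e (U x) * G (W x)))\<^sup>2
      \<le> (Lpn M p (\<lambda>x. F (W x)))\<^sup>2 + K\<^sup>2 * ((Lpn M p (\<lambda>x. e (U x)))\<^sup>2 * (Lpn M p (\<lambda>x. G (W x)))\<^sup>2)"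
    by (simp add: Lpn_power2 A_def B_def a_def m_def z_def)
qed

lemma (in prob_space) Lpn_sum_indep_mult_le:
  fixes X :: "nat \<times> nat \<Rightarrow> 'a \<Rightarrow> real" and S J :: "(nat \<times> nat) set"
    and G :: "nat \<Rightarrow> (nat \<times> nat \<Rightarrow> real) \<Rightarrow> real"
  assumes p: "p \<ge> 2" and K: "step_const p K"
    and ind: "indep_vars (\<lambda>_. borel) X S"
    and J: "J \<subseteq> S" "\<And>j. j \<in> {1..n} \<Longrightarrow> (j, c) \<in> S" "\<And>j. (j, c) \<notin> J"
    and G: "\<And>j. j \<in> {1..n} \<Longrightarrow> G j \<in> borel_measurable (PiM J (\<lambda>_. borel))"
      "\<And>j. j \<in> {1..n} \<Longrightarrow> integrable M (\<lambda>x. \<bar>G j (restrict (\<lambda>\<kappa>. X \<kappa> x) J)\<bar> powr p)"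
    and X: "\<And>j. j \<in> {1..n} \<Longrightarrow> integrable M (X (j, c))"
      "\<And>j. j \<in> {1..n} \<Longrightarrow> (\<integral>x. X (j, c) x \<partial>M) = 0"
      "\<And>j. j \<in> {1..n} \<Longrightarrow> integrable M (\<lambda>x. \<bar>X (j, c) x\<bar> powr p)"
    and k: "k \<le> n"
  shows "integrable M (\<lambda>x. \<bar>\<Sum>j\<in>{1..k}. X (j, c) x * G j (restrict (\<lambda>\<kappa>. X \<kappa> x) J)\<bar> powr p)
    \<and> (Lpn M p (\<lambda>x. \<Sum>j\<in>{1..k}. X (j, c) x * G j (restrict (\<lambda>\<kappa>. X \<kappa> x) J)))\<^sup>2
      \<le> K\<^sup>2 * (\<Sum>j\<in>{1..k}. (Lpn M p (X (j, c)))\<^sup>2 * (Lpn M p (\<lambda>x. G j (restrict (\<lambda>\<kappa>. X \<kappa> x) J)))\<^sup>2)"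
  using k
proof (induction k)
  case 0
  then show ?case using p by (simp add: Lpn_def)
next
  case (Suc k)
  define Jk where "Jk = J \<union> (\<lambda>i. (i, c)) ` {1..k}"
  have J_Jk: "J \<subseteq> Jk" by (auto simp: Jk_def)
  have k1: "Suc k \<in> {1..n}" using Suc.prems by simp
  have ind_k: "indep_var (PiM {(Suc k, c)} (\<lambda>_. borel)) (\<lambda>x. restrict (\<lambda>\<kappa>. X \<kappa> x) {(Suc k, c)})
      (PiM Jk (\<lambda>_. borel)) (\<lambda>x. restrict (\<lambda>\<kappa>. X \<kappa> x) Jk)"
    using J Suc.prems by (intro indep_var_restrict[OF ind]) (auto simp: Jk_def)
  have G_Jk: "(\<lambda>f. G j (restrict f J)) \<in> borel_measurable (PiM Jk (\<lambda>_. borel))" if "j \<in> {1..n}" for j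
    using measurable_comp[OF measurable_restrict_subset[OF J_Jk] G(1)[OF that]] by (simp add: comp_def)
  define S where "S f = (\<Sum>j\<in>{1..k}. f (j, c) * G j (restrict f J))" for f
  have S_meas: "S \<in> borel_measurable (PiM Jk (\<lambda>_. borel))"
    unfolding S_def using Suc.prems
    by (intro borel_measurable_sum borel_measurable_times measurable_component_singleton G_Jk)
      (auto simp: Jk_def)
  have e_meas: "(\<lambda>f. f (Suc k, c)) \<in> borel_measurable (PiM {(Suc k, c)} (\<lambda>_. borel))"
    by (rule measurable_component_singleton) simp
  have S_restrict: "S (restrict (\<lambda>\<kappa>. X \<kappa> x) Jk)
      = (\<Sum>j\<in>{1..k}. X (j, c) x * G j (restrict (\<lambda>\<kappa>. X \<kappa> x) J))" for x
    unfolding S_def using J_Jk by (intro sum.cong refl) (auto simp: Jk_def Int_absorb1)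
  have G_restrict: "restrict (restrict (\<lambda>\<kappa>. X \<kappa> x) Jk) J = restrict (\<lambda>\<kappa>. X \<kappa> x) J" for x
    using J_Jk by (simp add: Int_absorb1)
  have e_restrict: "restrict (\<lambda>\<kappa>. X \<kappa> x) {(Suc k, c)} (Suc k, c) = X (Suc k, c) x" for x
    by simp
  note IH = Suc.IH[OF Suc_leD[OF Suc.prems]]
  note step = Lpn_add_indep_mult_le[OF p K ind_k e_meas S_meas G_Jk[OF k1],
      unfolded e_restrict S_restrict G_restrict, OF X[OF k1] conjunct1[OF IH] G(2)[OF k1]]
  have sum_Suc: "(\<Sum>j\<in>{1..Suc k}. f j) = (\<Sum>j\<in>{1..k}. f j) + f (Suc k)" for f :: "nat \<Rightarrow> real"
    by (simp add: atLeastAtMostSuc_conv)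
  have "(Lpn M p (\<lambda>x. (\<Sum>j\<in>{1..k}. X (j, c) x * G j (restrict (\<lambda>\<kappa>. X \<kappa> x) J))
        + X (Suc k, c) x * G (Suc k) (restrict (\<lambda>\<kappa>. X \<kappa> x) J)))\<^sup>2
      \<le> K\<^sup>2 * (\<Sum>j\<in>{1..k}. (Lpn M p (X (j, c)))\<^sup>2 * (Lpn M p (\<lambda>x. G j (restrict (\<lambda>\<kappa>. X \<kappa> x) J)))\<^sup>2)
        + K\<^sup>2 * ((Lpn M p (X (Suc k, c)))\<^sup>2 * (Lpn M p (\<lambda>x. G (Suc k) (restrict (\<lambda>\<kappa>. X \<kappa> x) J)))\<^sup>2)"
    using step(2) conjunct2[OF IH] by linarith
  then show ?case using step(1) unfolding sum_Suc distrib_left by blast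
qed

section \<open>Splitting the chaos by its last index\<close>

lemma finite_Idx: "finite (Idx d n)"
proof (rule finite_subset)
  show "Idx d n \<subseteq> {xs. set xs \<subseteq> {1..n} \<and> length xs = d}" by (auto simp: Idx_def)
qed (simp add: finite_lists_length_eq)

lemma Idx_0: "Idx 0 n = {[]}"
  by (auto simp: Idx_def)

lemma Idx_Suc:
  "Idx (Suc c) n = (\<lambda>(j, I). I @ [j]) ` (SIGMA j:{1..n}. {I \<in> Idx c n. \<forall>i\<in>set I. i < j})"
proof
  show "(\<lambda>(j, I). I @ [j]) ` (SIGMA j:{1..n}. {I \<in> Idx c n. \<forall>i\<in>set I. i < j}) \<subseteq> Idx (Suc c) n"
    by (auto simp: Idx_def sorted_wrt_append)
  show "Idx (Suc c) n \<subseteq> (\<lambda>(j, I). I @ [j]) ` (SIGMA j:{1..n}. {I \<in> Idx c n. \<forall>i\<in>set I. i < j})"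
  proof
    fix I assume I: "I \<in> Idx (Suc c) n"
    then have "I \<noteq> []" by (auto simp: Idx_def)
    then have snoc: "I = butlast I @ [last I]" by simp
    have "sorted_wrt (<) (butlast I @ [last I])" "length I = Suc c" "set (butlast I @ [last I]) \<subseteq> {1..n}"
      using I snoc by (auto simp: Idx_def)
    then have "butlast I \<in> Idx c n" "\<forall>i\<in>set (butlast I). i < last I" "last I \<in> {1..n}"
      by (auto simp: Idx_def sorted_wrt_append)
    then show "I \<in> (\<lambda>(j, I). I @ [j]) ` (SIGMA j:{1..n}. {I \<in> Idx c n. \<forall>i\<in>set I. i < j})"
      by (intro image_eqI[of _ _ "(last I, butlast I)"]) (auto simp flip: snoc)
  qed
qed

lemma sum_Idx_Suc:
  fixes g :: "nat list \<Rightarrow> real"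
  shows "(\<Sum>I\<in>Idx (Suc c) n. g I)
    = (\<Sum>j\<in>{1..n}. \<Sum>I\<in>Idx c n. if \<forall>i\<in>set I. i < j then g (I @ [j]) else 0)"
proof -
  have "inj_on (\<lambda>(j, I). I @ [j]) (SIGMA j:{1..n}. {I \<in> Idx c n. \<forall>i\<in>set I. i < j})"
    by (auto simp: inj_on_def)
  then have "(\<Sum>I\<in>Idx (Suc c) n. g I)
      = (\<Sum>(j, I)\<in>(SIGMA j:{1..n}. {I \<in> Idx c n. \<forall>i\<in>set I. i < j}). g (I @ [j]))"
    unfolding Idx_Suc by (subst sum.reindex) (simp_all add: case_prod_beta')
  also have "\<dots> = (\<Sum>j\<in>{1..n}. \<Sum>I\<in>{I \<in> Idx c n. \<forall>i\<in>set I. i < j}. g (I @ [j]))"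
    by (subst sum.Sigma) (simp_all add: finite_Idx)
  also have "\<dots> = (\<Sum>j\<in>{1..n}. \<Sum>I\<in>Idx c n. if \<forall>i\<in>set I. i < j then g (I @ [j]) else 0)"
    by (simp add: sum.inter_filter finite_Idx)
  finally show ?thesis .
qed

lemma xiI_snoc:
  assumes "length I = c"
  shows "xiI \<xi> (Suc c) (I @ [j]) x = xiI \<xi> c I x * \<xi> j (Suc c) x"
proof -
  have "{1..Suc c} = insert (Suc c) {1..c}" by auto
  moreover have "(\<Prod>m\<in>{1..c}. \<xi> ((I @ [j]) ! (m - 1)) m x) = xiI \<xi> c I x"
    unfolding xiI_def using assms by (intro prod.cong) (auto simp: nth_append)
  ultimately show ?thesis using assms by (simp add: xiI_def nth_append)
qed

definition coeff_slice :: "(nat list \<Rightarrow> real) \<Rightarrow> nat \<Rightarrow> nat list \<Rightarrow> real" where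
  "coeff_slice b j I = (if \<forall>i\<in>set I. i < j then b (I @ [j]) else 0)"

lemma Qd_Suc: "Qd \<xi> (Suc c) n b x = (\<Sum>j\<in>{1..n}. \<xi> j (Suc c) x * Qd \<xi> c n (coeff_slice b j) x)"
proof -
  have "Qd \<xi> (Suc c) n b x = (\<Sum>j\<in>{1..n}. \<Sum>I\<in>Idx c n.
      if \<forall>i\<in>set I. i < j then b (I @ [j]) * xiI \<xi> (Suc c) (I @ [j]) x else 0)"
    unfolding Qd_def by (rule sum_Idx_Suc)
  also have "\<dots> = (\<Sum>j\<in>{1..n}. \<Sum>I\<in>Idx c n. \<xi> j (Suc c) x * (coeff_slice b j I * xiI \<xi> c I x))"
    by (intro sum.cong refl) (auto simp: coeff_slice_def xiI_snoc Idx_def)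
  finally show ?thesis by (simp add: Qd_def sum_distrib_left)
qed

lemma sum_sq_Idx_Suc:
  "(\<Sum>I\<in>Idx (Suc c) n. (b I)\<^sup>2) = (\<Sum>j\<in>{1..n}. \<Sum>I\<in>Idx c n. (coeff_slice b j I)\<^sup>2)"
  by (subst sum_Idx_Suc) (auto simp: coeff_slice_def intro!: sum.cong)

(* Q_c as a function of the first c columns of the family, so that the independence of
   column c + 1 from them can be applied. *)
definition Qpoly :: "nat \<Rightarrow> nat \<Rightarrow> (nat list \<Rightarrow> real) \<Rightarrow> (nat \<times> nat \<Rightarrow> real) \<Rightarrow> real" where
  "Qpoly c n b f = (\<Sum>I\<in>Idx c n. b I * (\<Prod>m\<in>{1..c}. f (I ! (m - 1), m)))"

lemma Idx_nth_mem: "I \<in> Idx c n \<Longrightarrow> m \<in> {1..c} \<Longrightarrow> (I ! (m - 1), m) \<in> {1..n} \<times> {1..c}"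
  by (auto simp: Idx_def)
    (metis Suc_le_eq Suc_pred atLeastAtMost_iff nth_mem subsetD)+

lemma Qpoly_restrict:
  assumes "{1..n} \<times> {1..c} \<subseteq> J"
  shows "Qpoly c n b (restrict (\<lambda>\<kappa>. (\<lambda>(i, m). \<xi> i m) \<kappa> x) J) = Qd \<xi> c n b x"
proof -
  have "(I ! (m - 1), m) \<in> J" if "I \<in> Idx c n" "m \<in> {1..c}" for I m
    using Idx_nth_mem[OF that] assms by blast
  then show ?thesis unfolding Qpoly_def Qd_def xiI_def
    by (intro sum.cong refl arg_cong2[where f = "(*)"] prod.cong) auto
qed

lemma Qpoly_measurable:
  assumes "{1..n} \<times> {1..c} \<subseteq> J"
  shows "Qpoly c n b \<in> borel_measurable (PiM J (\<lambda>_. borel))"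
proof -
  have "(I ! (m - 1), m) \<in> J" if "I \<in> Idx c n" "m \<in> {1..c}" for I m
    using Idx_nth_mem[OF that] assms by blast
  then show ?thesis unfolding Qpoly_def
    by (intro borel_measurable_sum borel_measurable_times borel_measurable_prod
      measurable_component_singleton) auto
qed

lemma Idx_nonempty_imp_one_le:
  assumes "Idx d n \<noteq> {}" "1 \<le> d"
  shows "1 \<le> n"
proof -
  obtain I where "I \<in> Idx d n" using assms(1) by blast
  then have "I \<noteq> []" "set I \<subseteq> {1..n}" using assms(2) by (auto simp: Idx_def)
  then show ?thesis using hd_in_set[of I] by fastforce
qed

section \<open>Induction over the columns\<close>

lemma (in prob_space) Lpn_const:
  fixes p c :: real
  assumes "p > 0"
  shows "Lpn M p (\<lambda>_. c) = \<bar>c\<bar>"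
  using assms by (simp add: Lpn_def prob_space powr_powr)

lemma Lpn_le_mu:
  assumes "j \<in> {1..n}"
  shows "Lpn M p (\<xi> j m) \<le> mu M \<xi> n m p"
  unfolding mu_def using assms by (intro cSUP_upper) auto

lemma (in prob_space) Lpn_Qd_Suc_le:
  fixes \<xi> :: "nat \<Rightarrow> nat \<Rightarrow> 'a \<Rightarrow> real"
  assumes p: "p \<ge> 2" and K: "step_const p K"
    and ind: "indep_vars (\<lambda>_. borel) (\<lambda>(i, m). \<xi> i m) ({1..n} \<times> {1..d})"
    and \<xi>: "\<And>i m. i \<in> {1..n} \<Longrightarrow> m \<in> {1..d} \<Longrightarrow> integrable M (\<xi> i m)"
      "\<And>i m. i \<in> {1..n} \<Longrightarrow> m \<in> {1..d} \<Longrightarrow> (\<integral>x. \<xi> i m x \<partial>M) = 0"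
      "\<And>i m. i \<in> {1..n} \<Longrightarrow> m \<in> {1..d} \<Longrightarrow> integrable M (\<lambda>x. \<bar>\<xi> i m x\<bar> powr p)"
    and c: "Suc c \<le> d"
    and Q: "\<And>j. integrable M (\<lambda>x. \<bar>Qd \<xi> c n (coeff_slice b j) x\<bar> powr p)"
  shows "integrable M (\<lambda>x. \<bar>Qd \<xi> (Suc c) n b x\<bar> powr p)
    \<and> (Lpn M p (Qd \<xi> (Suc c) n b))\<^sup>2
      \<le> K\<^sup>2 * (\<Sum>j\<in>{1..n}. (Lpn M p (\<xi> j (Suc c)))\<^sup>2 * (Lpn M p (Qd \<xi> c n (coeff_slice b j)))\<^sup>2)"
proof -
  define J where "J = {1..n} \<times> {1..c}"
  define G where "G j = Qpoly c n (coeff_slice b j)" for j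
  have G_restrict: "G j (restrict (\<lambda>\<kappa>. (\<lambda>(i, m). \<xi> i m) \<kappa> x) J) = Qd \<xi> c n (coeff_slice b j) x" for j x
    unfolding G_def J_def by (rule Qpoly_restrict) simp
  have J_sub: "J \<subseteq> {1..n} \<times> {1..d}" using c by (auto simp: J_def)
  have col: "(j, Suc c) \<in> {1..n} \<times> {1..d}" if "j \<in> {1..n}" for j using that c by simp
  have notin: "(j, Suc c) \<notin> J" for j by (simp add: J_def)
  have G_meas: "G j \<in> borel_measurable (PiM J (\<lambda>_. borel))" for j
    unfolding G_def J_def by (rule Qpoly_measurable) simp
  have G_int: "integrable M (\<lambda>x. \<bar>G j (restrict (\<lambda>\<kappa>. (\<lambda>(i, m). \<xi> i m) \<kappa> x) J)\<bar> powr p)" for j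
    unfolding G_restrict by (rule Q)
  have X: "integrable M ((\<lambda>(i, m). \<xi> i m) (j, Suc c))"
    "(\<integral>x. (\<lambda>(i, m). \<xi> i m) (j, Suc c) x \<partial>M) = 0"
    "integrable M (\<lambda>x. \<bar>(\<lambda>(i, m). \<xi> i m) (j, Suc c) x\<bar> powr p)" if "j \<in> {1..n}" for j
    using \<xi> that c by simp_all
  show ?thesis
    using Lpn_sum_indep_mult_le[OF p K ind J_sub col notin G_meas G_int X order_refl]
    unfolding G_restrict by (simp add: Qd_Suc[abs_def])
qed

lemma (in prob_space) Lpn_Qd_le:
  fixes \<xi> :: "nat \<Rightarrow> nat \<Rightarrow> 'a \<Rightarrow> real"
  assumes p: "p \<ge> 2" and K: "step_const p K"
    and ind: "indep_vars (\<lambda>_. borel) (\<lambda>(i, m). \<xi> i m) ({1..n} \<times> {1..d})"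
    and \<xi>: "\<And>i m. i \<in> {1..n} \<Longrightarrow> m \<in> {1..d} \<Longrightarrow> integrable M (\<xi> i m)"
      "\<And>i m. i \<in> {1..n} \<Longrightarrow> m \<in> {1..d} \<Longrightarrow> (\<integral>x. \<xi> i m x \<partial>M) = 0"
      "\<And>i m. i \<in> {1..n} \<Longrightarrow> m \<in> {1..d} \<Longrightarrow> integrable M (\<lambda>x. \<bar>\<xi> i m x\<bar> powr p)"
    and c: "c \<le> d"
  shows "integrable M (\<lambda>x. \<bar>Qd \<xi> c n b x\<bar> powr p)
    \<and> (Lpn M p (Qd \<xi> c n b))\<^sup>2
      \<le> K ^ (2 * c) * (\<Prod>m\<in>{1..c}. (mu M \<xi> n m p)\<^sup>2) * (\<Sum>I\<in>Idx c n. (b I)\<^sup>2)"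
  using c
proof (induction c arbitrary: b)
  case 0
  have "Qd \<xi> 0 n b = (\<lambda>_. b [])" by (auto simp: Qd_def Idx_0 xiI_def)
  then show ?case using p by (simp add: Lpn_const Idx_0)
next
  case (Suc c)
  have IH: "integrable M (\<lambda>x. \<bar>Qd \<xi> c n (coeff_slice b j) x\<bar> powr p)"
    "(Lpn M p (Qd \<xi> c n (coeff_slice b j)))\<^sup>2
      \<le> K ^ (2 * c) * (\<Prod>m\<in>{1..c}. (mu M \<xi> n m p)\<^sup>2) * (\<Sum>I\<in>Idx c n. (coeff_slice b j I)\<^sup>2)" for j
    using Suc by auto
  note step = Lpn_Qd_Suc_le[OF p K ind \<xi> Suc.prems IH(1)]
  define P where "P = (\<Prod>m\<in>{1..c}. (mu M \<xi> n m p)\<^sup>2)"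
  define \<mu> where "\<mu> = (mu M \<xi> n (Suc c) p)\<^sup>2"
  have "(Lpn M p (Qd \<xi> (Suc c) n b))\<^sup>2
      \<le> K\<^sup>2 * (\<Sum>j\<in>{1..n}. (Lpn M p (\<xi> j (Suc c)))\<^sup>2 * (Lpn M p (Qd \<xi> c n (coeff_slice b j)))\<^sup>2)"
    using step by blast
  also have "\<dots> \<le> K\<^sup>2 * (\<Sum>j\<in>{1..n}. \<mu> * (K ^ (2 * c) * P * (\<Sum>I\<in>Idx c n. (coeff_slice b j I)\<^sup>2)))"
  proof -
    have "(Lpn M p (\<xi> j (Suc c)))\<^sup>2 \<le> \<mu>" if "j \<in> {1..n}" for j
      unfolding \<mu>_def using Lpn_le_mu[OF that] by (intro power_mono) (simp_all add: Lpn_def)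
    then show ?thesis
      using IH(2) by (intro mult_left_mono sum_mono mult_mono) (simp_all add: P_def \<mu>_def prod_nonneg)
  qed
  also have "\<dots> = K ^ (2 * Suc c) * (P * \<mu>) * (\<Sum>j\<in>{1..n}. \<Sum>I\<in>Idx c n. (coeff_slice b j I)\<^sup>2)"
    by (simp add: sum_distrib_left power_add power_mult_distrib mult_ac power2_eq_square flip: power_mult)
  also have "\<dots> = K ^ (2 * Suc c) * (\<Prod>m\<in>{1..Suc c}. (mu M \<xi> n m p)\<^sup>2) * (\<Sum>I\<in>Idx (Suc c) n. (b I)\<^sup>2)"
    by (simp add: P_def \<mu>_def sum_sq_Idx_Suc atLeastAtMostSuc_conv)
  finally show ?case using step by blast
qed

lemma mu_nonneg:
  assumes "1 \<le> n"
  shows "0 \<le> mu M \<xi> n m p"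
  using Lpn_le_mu[of 1 n M p \<xi> m] assms by (simp add: Lpn_def order_trans[OF powr_ge_zero])

lemma moment_const_power_le:
  fixes p :: real
  assumes p: "p \<ge> 2" and d: "d \<ge> 1"
  shows "moment_const p ^ d \<le> 2 powr (real d / 2) * (p ^ d / ln p)"
proof -
  define L where "L = max 1 (ln p)"
  have L: "1 \<le> L" "ln p \<le> L" by (auto simp: L_def)
  have "sqrt 2 ^ d = 2 powr (real d / 2)"
    by (simp add: powr_half_sqrt [symmetric] powr_realpow [symmetric] powr_powr)
  then have "moment_const p ^ d = 2 powr (real d / 2) * (p ^ d / L ^ d)"
    by (simp add: moment_const_def L_def power_divide power_mult_distrib)
  moreover have "ln p \<le> L ^ d"
    using L d power_increasing[of 1 d L] by simp
  then have "p ^ d / L ^ d \<le> p ^ d / ln p"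
    using p L by (intro divide_left_mono) auto
  ultimately show ?thesis
    using mult_left_mono[of "p ^ d / L ^ d" "p ^ d / ln p" "2 powr (real d / 2)"] by simp
qed

theorem theorem7:
  fixes M :: "'a measure" and \<xi> :: "nat \<Rightarrow> nat \<Rightarrow> 'a \<Rightarrow> real"
    and d n :: nat and p :: real
  assumes "prob_space M"
    and "d \<ge> 1" and "p \<ge> 2"
    and "\<And>i m. i \<in> {1..n} \<Longrightarrow> m \<in> {1..d} \<Longrightarrow> \<xi> i m \<in> borel_measurable M"
    and "prob_space.indep_vars M (\<lambda>_. borel) (\<lambda>(i, m). \<xi> i m) ({1..n} \<times> {1..d})"
    and "\<And>i m. i \<in> {1..n} \<Longrightarrow> m \<in> {1..d} \<Longrightarrow> integrable M (\<xi> i m)"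
    and "\<And>i m. i \<in> {1..n} \<Longrightarrow> m \<in> {1..d} \<Longrightarrow> (\<integral>x. \<xi> i m x \<partial>M) = 0"
    and "\<And>i m. i \<in> {1..n} \<Longrightarrow> m \<in> {1..d} \<Longrightarrow> integrable M (\<lambda>x. \<bar>\<xi> i m x\<bar> powr p)"
    and "b \<in> Bset d n"
  shows "Lpn M p (Qd \<xi> d n b) \<le> 2 powr (real d / 2) * (p ^ d / ln p) * (\<Prod>m\<in>{1..d}. mu M \<xi> n m p)"
proof -
  interpret prob_space M by (rule assms(1))
  define K where "K = moment_const p"
  define P where "P = (\<Prod>m\<in>{1..d}. mu M \<xi> n m p)"
  have unit: "(\<Sum>I\<in>Idx d n. (b I)\<^sup>2) = 1" using assms(9) by (simp add: Bset_def)
  then have "Idx d n \<noteq> {}" by auto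
  \<comment> \<open>the supremum defining mu is taken over {1..n}, so its sign needs n \<ge> 1\<close>
  then have "1 \<le> n" using Idx_nonempty_imp_one_le assms(2) by blast
  then have P: "0 \<le> P" unfolding P_def by (intro prod_nonneg mu_nonneg)
  have "(Lpn M p (Qd \<xi> d n b))\<^sup>2 \<le> K ^ (2 * d) * (\<Prod>m\<in>{1..d}. (mu M \<xi> n m p)\<^sup>2)"
    using Lpn_Qd_le[OF assms(3) step_const_moment_const[OF assms(3)] assms(5-8) order_refl, where b = b]
    unfolding unit K_def by simp
  also have "\<dots> = (K ^ d * P)\<^sup>2"
    by (simp only: P_def power_mult_distrib prod_power_distrib power_even_eq)
  finally have sq: "(Lpn M p (Qd \<xi> d n b))\<^sup>2 \<le> (K ^ d * P)\<^sup>2" .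
  have "0 \<le> K" using assms(3) by (simp add: K_def moment_const_def)
  then have "Lpn M p (Qd \<xi> d n b) \<le> K ^ d * P"
    using power2_le_imp_le[OF sq] P by simp
  also have "\<dots> \<le> 2 powr (real d / 2) * (p ^ d / ln p) * P"
    using moment_const_power_le[OF assms(3,2)] P by (intro mult_right_mono) (simp_all add: K_def)
  finally show ?thesis unfolding P_def .
qed

end
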